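(* Every partial field is global: if $F$ is a partial field, then $F$ is isomorphic to $\Gamma(\mathrm{Spec}(F))=\mathcal{O}_X(X)$ where $(X,\mathcal{O}_X)=\mathrm{Spec}(F)$.
   Context: A partial ring is a set with $0$, a set of summable pairs and a commutative, unital, associative (in the sense: $(a,b),(a+b,c)$ summable iff $(b,c),(a,b+c)$ summable, and then $(a+b)+c=a+(b+c)$) partial addition, together with a commutative associative multiplication with unit $1$ such that $0\cdot a=0$ and multiplication distributes over summable pairs (if $(a_1,a_2)$ is summable then so is $(a_1x,a_2x)$ and $(a_1+a_2)x=a_1x+a_2x$). A partial field is a partial ring in which every nonzero element has a multiplicative inverse. For a partial ring $A$, $X_A$ is the set of prime ideals with the topology generated by $D(a)=\{\mathfrak p: a\notin\mathfrak p\}$; for open $U$, $S_U=\{a: a\notin\mathfrak p\ \forall \mathfrak p\in U\}$, and $\mathcal{O}_X$ is the sheafification of $U\mapsto S_U^{-1}A$ (localization: classes $a/s$ with $a/s=b/t$ iff $uta=usb$ for some $u\in S_U$). $\mathrm{Spec}(A)=(X_A,\mathcal{O}_X)$. A partial ring is global if it is isomorphic to $\Gamma(X,\mathcal{O})=\mathcal{O}(X)$ for some affine partial scheme $(X,\mathcal{O})$, i.e. a locally partial-ringed space isomorphic to $\mathrm{Spec}(A)$ for some partial ring $A$. *)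

theory Defs
  imports Main
begin

record 'a pring =
  pcarrier :: "'a set"
  pzero :: 'a
  pone :: 'a
  psummable :: "'a \<Rightarrow> 'a \<Rightarrow> bool"
  padd :: "'a \<Rightarrow> 'a \<Rightarrow> 'a"
  pmult :: "'a \<Rightarrow> 'a \<Rightarrow> 'a"

definition partial_ring :: "('a, 'b) pring_scheme \<Rightarrow> bool" where
  "partial_ring A \<longleftrightarrow>
     (let C = pcarrier A; sm = psummable A; ad = padd A; mu = pmult A; z = pzero A; e = pone A in
      z \<in> C \<and> e \<in> C
    \<and> (\<forall>a b. sm a b \<longrightarrow> a \<in> C \<and> b \<in> C \<and> ad a b \<in> C)
    \<and> (\<forall>a b. sm a b \<longrightarrow> sm b a \<and> ad a b = ad b a)
    \<and> (\<forall>a\<in>C. sm a z \<and> ad a z = a)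
    \<and> (\<forall>a\<in>C. \<forall>b\<in>C. \<forall>c\<in>C.
          ((sm a b \<and> sm (ad a b) c) \<longleftrightarrow> (sm b c \<and> sm a (ad b c)))
        \<and> (sm a b \<and> sm (ad a b) c \<longrightarrow> ad (ad a b) c = ad a (ad b c)))
    \<and> (\<forall>a\<in>C. \<forall>b\<in>C. mu a b \<in> C \<and> mu a b = mu b a)
    \<and> (\<forall>a\<in>C. \<forall>b\<in>C. \<forall>c\<in>C. mu (mu a b) c = mu a (mu b c))
    \<and> (\<forall>a\<in>C. mu a e = a)
    \<and> (\<forall>a\<in>C. mu z a = z)
    \<and> (\<forall>a1 a2 x. sm a1 a2 \<longrightarrow> x \<in> C \<longrightarrow>
          sm (mu a1 x) (mu a2 x) \<and> mu (ad a1 a2) x = ad (mu a1 x) (mu a2 x)))"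

definition partial_field :: "('a, 'b) pring_scheme \<Rightarrow> bool" where
  "partial_field A \<longleftrightarrow> partial_ring A \<and>
     (\<forall>a\<in>pcarrier A. a \<noteq> pzero A \<longrightarrow> (\<exists>b\<in>pcarrier A. pmult A a b = pone A))"

definition pring_iso :: "('a, 'c) pring_scheme \<Rightarrow> ('b, 'd) pring_scheme \<Rightarrow> ('a \<Rightarrow> 'b) \<Rightarrow> bool" where
  "pring_iso A B f \<longleftrightarrow>
     bij_betw f (pcarrier A) (pcarrier B)
   \<and> f (pzero A) = pzero B \<and> f (pone A) = pone B
   \<and> (\<forall>a\<in>pcarrier A. \<forall>b\<in>pcarrier A. psummable B (f a) (f b) \<longleftrightarrow> psummable A a b)
   \<and> (\<forall>a b. psummable A a b \<longrightarrow> f (padd A a b) = padd B (f a) (f b))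
   \<and> (\<forall>a\<in>pcarrier A. \<forall>b\<in>pcarrier A. f (pmult A a b) = pmult B (f a) (f b))"

definition pring_isomorphic :: "('a, 'c) pring_scheme \<Rightarrow> ('b, 'd) pring_scheme \<Rightarrow> bool" where
  "pring_isomorphic A B \<longleftrightarrow> (\<exists>f. pring_iso A B f)"

definition pideal :: "('a, 'b) pring_scheme \<Rightarrow> 'a set \<Rightarrow> bool" where
  "pideal A I \<longleftrightarrow> I \<subseteq> pcarrier A \<and> pzero A \<in> I
     \<and> (\<forall>a b. psummable A a b \<longrightarrow> a \<in> I \<longrightarrow> b \<in> I \<longrightarrow> padd A a b \<in> I)
     \<and> (\<forall>a\<in>pcarrier A. \<forall>b\<in>I. pmult A a b \<in> I)"

definition prime_pideal :: "('a, 'b) pring_scheme \<Rightarrow> 'a set \<Rightarrow> bool" where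
  "prime_pideal A P \<longleftrightarrow> pideal A P \<and> P \<noteq> pcarrier A
     \<and> (\<forall>a\<in>pcarrier A. \<forall>b\<in>pcarrier A. pmult A a b \<in> P \<longrightarrow> a \<in> P \<or> b \<in> P)"

definition spec_pts :: "('a, 'b) pring_scheme \<Rightarrow> 'a set set" where
  "spec_pts A = {P. prime_pideal A P}"

definition basicD :: "('a, 'b) pring_scheme \<Rightarrow> 'a \<Rightarrow> 'a set set" where
  "basicD A a = {P \<in> spec_pts A. a \<notin> P}"

inductive spec_open :: "('a, 'b) pring_scheme \<Rightarrow> 'a set set \<Rightarrow> bool" for A where
  whole: "spec_open A (spec_pts A)"
| basic: "a \<in> pcarrier A \<Longrightarrow> spec_open A (basicD A a)"
| inter: "spec_open A U \<Longrightarrow> spec_open A V \<Longrightarrow> spec_open A (U \<inter> V)"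
| union: "(\<And>U. U \<in> K \<Longrightarrow> spec_open A U) \<Longrightarrow> spec_open A (\<Union>K)"

definition mult_set :: "('a, 'b) pring_scheme \<Rightarrow> 'a set set \<Rightarrow> 'a set" where
  "mult_set A U = {a \<in> pcarrier A. \<forall>P\<in>U. a \<notin> P}"

definition frac_cls :: "('a, 'b) pring_scheme \<Rightarrow> 'a set \<Rightarrow> 'a \<Rightarrow> 'a \<Rightarrow> ('a \<times> 'a) set" where
  "frac_cls A S a s = {(b, t). b \<in> pcarrier A \<and> t \<in> S \<and>
      (\<exists>u\<in>S. pmult A u (pmult A t a) = pmult A u (pmult A s b))}"

definition loc_carrier :: "('a, 'b) pring_scheme \<Rightarrow> 'a set \<Rightarrow> ('a \<times> 'a) set set" where
  "loc_carrier A S = {frac_cls A S a s | a s. a \<in> pcarrier A \<and> s \<in> S}"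

definition loc_mult :: "('a, 'b) pring_scheme \<Rightarrow> 'a set \<Rightarrow> ('a \<times> 'a) set \<Rightarrow> ('a \<times> 'a) set \<Rightarrow> ('a \<times> 'a) set" where
  "loc_mult A S x y = \<Union>{frac_cls A S (pmult A a b) (pmult A s t) | a s b t. (a, s) \<in> x \<and> (b, t) \<in> y}"

definition loc_summable :: "('a, 'b) pring_scheme \<Rightarrow> 'a set \<Rightarrow> ('a \<times> 'a) set \<Rightarrow> ('a \<times> 'a) set \<Rightarrow> bool" where
  "loc_summable A S x y \<longleftrightarrow> x \<in> loc_carrier A S \<and> y \<in> loc_carrier A S \<and>
     (\<exists>a b u. (a, u) \<in> x \<and> (b, u) \<in> y \<and> psummable A a b)"

definition loc_add :: "('a, 'b) pring_scheme \<Rightarrow> 'a set \<Rightarrow> ('a \<times> 'a) set \<Rightarrow> ('a \<times> 'a) set \<Rightarrow> ('a \<times> 'a) set" where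
  "loc_add A S x y = \<Union>{frac_cls A S (padd A a b) u | a b u. (a, u) \<in> x \<and> (b, u) \<in> y \<and> psummable A a b}"

section \<open>The presheaf U \<mapsto> S_U^{-1} A, its stalks and its sheafification\<close>

abbreviation sec :: "('a, 'b) pring_scheme \<Rightarrow> 'a set set \<Rightarrow> ('a \<times> 'a) set set" where
  "sec A U \<equiv> loc_carrier A (mult_set A U)"

text \<open>Restriction to a smaller open W (note S_U \<subseteq> S_W): a/s \<mapsto> a/s.\<close>
definition res :: "('a, 'b) pring_scheme \<Rightarrow> 'a set set \<Rightarrow> ('a \<times> 'a) set \<Rightarrow> ('a \<times> 'a) set" where
  "res A W x = \<Union>{frac_cls A (mult_set A W) a s | a s. (a, s) \<in> x}"

type_synonym 'a germ = "('a set set \<times> ('a \<times> 'a) set) set"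

text \<open>Germ at P of a section x over an open neighbourhood U of P (element of the colimit).\<close>
definition germ :: "('a, 'b) pring_scheme \<Rightarrow> 'a set \<Rightarrow> 'a set set \<Rightarrow> ('a \<times> 'a) set \<Rightarrow> 'a germ" where
  "germ A P U x = {(V, y). spec_open A V \<and> P \<in> V \<and> y \<in> sec A V \<and>
      (\<exists>W. spec_open A W \<and> P \<in> W \<and> W \<subseteq> U \<inter> V \<and> res A W x = res A W y)}"

definition stalk :: "('a, 'b) pring_scheme \<Rightarrow> 'a set \<Rightarrow> 'a germ set" where
  "stalk A P = {germ A P U x | U x. spec_open A U \<and> P \<in> U \<and> x \<in> sec A U}"

definition germ_mult :: "('a, 'b) pring_scheme \<Rightarrow> 'a set \<Rightarrow> 'a germ \<Rightarrow> 'a germ \<Rightarrow> 'a germ" where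
  "germ_mult A P g h = \<Union>{germ A P W (loc_mult A (mult_set A W) x y) | W x y.
      spec_open A W \<and> P \<in> W \<and> (W, x) \<in> g \<and> (W, y) \<in> h}"

definition germ_summable :: "('a, 'b) pring_scheme \<Rightarrow> 'a set \<Rightarrow> 'a germ \<Rightarrow> 'a germ \<Rightarrow> bool" where
  "germ_summable A P g h \<longleftrightarrow> g \<in> stalk A P \<and> h \<in> stalk A P \<and>
     (\<exists>W x y. spec_open A W \<and> P \<in> W \<and> (W, x) \<in> g \<and> (W, y) \<in> h \<and>
        loc_summable A (mult_set A W) x y)"

definition germ_add :: "('a, 'b) pring_scheme \<Rightarrow> 'a set \<Rightarrow> 'a germ \<Rightarrow> 'a germ \<Rightarrow> 'a germ" where
  "germ_add A P g h = \<Union>{germ A P W (loc_add A (mult_set A W) x y) | W x y.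
      spec_open A W \<and> P \<in> W \<and> (W, x) \<in> g \<and> (W, y) \<in> h \<and>
      loc_summable A (mult_set A W) x y}"

text \<open>Global sections of the sheafification O_X: (extensional) functions on X assigning to
  each point a germ, locally given by a section of the presheaf.\<close>
definition gamma_carrier :: "('a, 'b) pring_scheme \<Rightarrow> ('a set \<Rightarrow> 'a germ) set" where
  "gamma_carrier A = {\<sigma>. (\<forall>P. P \<notin> spec_pts A \<longrightarrow> \<sigma> P = undefined) \<and>
     (\<forall>P\<in>spec_pts A. \<exists>U x. spec_open A U \<and> P \<in> U \<and> x \<in> sec A U \<and>
        (\<forall>Q\<in>U. \<sigma> Q = germ A Q U x))}"

definition gamma_const :: "('a, 'b) pring_scheme \<Rightarrow> 'a \<Rightarrow> ('a set \<Rightarrow> 'a germ)" where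
  "gamma_const A a = (\<lambda>P. if P \<in> spec_pts A
       then germ A P (spec_pts A) (frac_cls A (mult_set A (spec_pts A)) a (pone A))
       else undefined)"

definition Gamma_Spec :: "('a, 'b) pring_scheme \<Rightarrow> ('a set \<Rightarrow> 'a germ) pring" where
  "Gamma_Spec A = \<lparr>
     pcarrier = gamma_carrier A,
     pzero = gamma_const A (pzero A),
     pone = gamma_const A (pone A),
     psummable = (\<lambda>\<sigma> \<tau>. \<sigma> \<in> gamma_carrier A \<and> \<tau> \<in> gamma_carrier A \<and>
                       (\<forall>P\<in>spec_pts A. germ_summable A P (\<sigma> P) (\<tau> P))),
     padd = (\<lambda>\<sigma> \<tau> P. if P \<in> spec_pts A then germ_add A P (\<sigma> P) (\<tau> P) else undefined),
     pmult = (\<lambda>\<sigma> \<tau> P. if P \<in> spec_pts A then germ_mult A P (\<sigma> P) (\<tau> P) else undefined) \<rparr>"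

end

theory Submission
  imports Defs
begin

(* If 1 = 0 the partial field is {0}: its spectrum is empty and the global sections form a
   one-element partial ring. Otherwise every nonzero element is invertible, so {0} is the only
   prime ideal and Spec F is a single point whose only open neighbourhood is the whole space.
   The multiplicative set S_X = F - {0} consists of units, and localizing at units changes
   nothing, since a/s = (s^-1 a)/1. So the presheaf has the single stalk F, sheafification
   does not alter it, and a |-> a/1 is an isomorphism from F onto the global sections. *)

locale partial_ring_rules =
  fixes A :: "('a, 'b) pring_scheme"
  assumes partial_ring: "partial_ring A"
begin

abbreviation C where "C \<equiv> pcarrier A"
abbreviation zero ("\<zero>") where "\<zero> \<equiv> pzero A"
abbreviation one ("\<one>") where "\<one> \<equiv> pone A"
abbreviation mult (infixl "\<cdot>" 70) where "a \<cdot> b \<equiv> pmult A a b"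
abbreviation add (infixl "\<oplus>" 65) where "a \<oplus> b \<equiv> padd A a b"
abbreviation sm where "sm \<equiv> psummable A"

lemma axioms_unfolded:
  "\<zero> \<in> C" "\<one> \<in> C"
  "\<forall>a b. sm a b \<longrightarrow> a \<in> C \<and> b \<in> C \<and> a \<oplus> b \<in> C"
  "\<forall>a b. sm a b \<longrightarrow> sm b a \<and> a \<oplus> b = b \<oplus> a"
  "\<forall>a\<in>C. sm a \<zero> \<and> a \<oplus> \<zero> = a"
  "\<forall>a\<in>C. \<forall>b\<in>C. \<forall>c\<in>C. ((sm a b \<and> sm (a \<oplus> b) c) \<longleftrightarrow> (sm b c \<and> sm a (b \<oplus> c)))
      \<and> (sm a b \<and> sm (a \<oplus> b) c \<longrightarrow> a \<oplus> b \<oplus> c = a \<oplus> (b \<oplus> c))"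
  "\<forall>a\<in>C. \<forall>b\<in>C. a \<cdot> b \<in> C \<and> a \<cdot> b = b \<cdot> a"
  "\<forall>a\<in>C. \<forall>b\<in>C. \<forall>c\<in>C. a \<cdot> b \<cdot> c = a \<cdot> (b \<cdot> c)"
  "\<forall>a\<in>C. a \<cdot> \<one> = a"
  "\<forall>a\<in>C. \<zero> \<cdot> a = \<zero>"
  "\<forall>a b x. sm a b \<longrightarrow> x \<in> C \<longrightarrow> sm (a \<cdot> x) (b \<cdot> x) \<and> (a \<oplus> b) \<cdot> x = a \<cdot> x \<oplus> b \<cdot> x"
  using partial_ring unfolding partial_ring_def Let_def by - (elim conjE, assumption)+

lemma zero_closed [simp]: "\<zero> \<in> C"
  and one_closed [simp]: "\<one> \<in> C"
  using axioms_unfolded(1,2) .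

lemma summable_closed: "sm a b \<Longrightarrow> a \<in> C \<and> b \<in> C \<and> a \<oplus> b \<in> C"
  using axioms_unfolded(3) by blast

lemma summable_zero: "a \<in> C \<Longrightarrow> sm a \<zero>"
  and add_zero_right: "a \<in> C \<Longrightarrow> a \<oplus> \<zero> = a"
  using axioms_unfolded(5) by blast+

lemma mult_closed [simp]: "a \<in> C \<Longrightarrow> b \<in> C \<Longrightarrow> a \<cdot> b \<in> C"
  and mult_comm: "a \<in> C \<Longrightarrow> b \<in> C \<Longrightarrow> a \<cdot> b = b \<cdot> a"
  using axioms_unfolded(7) by blast+

lemma mult_assoc: "a \<in> C \<Longrightarrow> b \<in> C \<Longrightarrow> c \<in> C \<Longrightarrow> a \<cdot> b \<cdot> c = a \<cdot> (b \<cdot> c)"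
  using axioms_unfolded(8) by blast

lemma mult_one_right [simp]: "a \<in> C \<Longrightarrow> a \<cdot> \<one> = a"
  and mult_zero_left [simp]: "a \<in> C \<Longrightarrow> \<zero> \<cdot> a = \<zero>"
  using axioms_unfolded(9,10) by blast+

lemma summable_mult_distrib:
  "sm a b \<Longrightarrow> x \<in> C \<Longrightarrow> sm (a \<cdot> x) (b \<cdot> x) \<and> (a \<oplus> b) \<cdot> x = a \<cdot> x \<oplus> b \<cdot> x"
  using axioms_unfolded(11) by blast

lemma mult_one_left [simp]: "a \<in> C \<Longrightarrow> \<one> \<cdot> a = a"
  using mult_comm[of \<one> a] by simp

lemma mult_zero_right [simp]: "a \<in> C \<Longrightarrow> a \<cdot> \<zero> = \<zero>"
  using mult_comm[of \<zero> a] by simp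

lemma mult_left_commute: "a \<in> C \<Longrightarrow> b \<in> C \<Longrightarrow> c \<in> C \<Longrightarrow> a \<cdot> (b \<cdot> c) = b \<cdot> (a \<cdot> c)"
  by (simp flip: mult_assoc add: mult_comm[of a b])

lemma carrier_trivial: "\<one> = \<zero> \<Longrightarrow> C = {\<zero>}"
  using mult_one_right mult_zero_right zero_closed by fastforce

lemma spec_pts_trivial: "\<one> = \<zero> \<Longrightarrow> spec_pts A = {}"
  using carrier_trivial
  by (auto simp: spec_pts_def prime_pideal_def pideal_def)

lemma gamma_const_iso_trivial:
  assumes "\<one> = \<zero>"
  shows "pring_iso A (Gamma_Spec A) (gamma_const A)"
proof -
  note no_pts = spec_pts_trivial[OF assms]
  have const: "gamma_const A a = (\<lambda>P. undefined)" for a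
    by (simp add: gamma_const_def no_pts)
  have "pcarrier (Gamma_Spec A) = {\<lambda>P. undefined}"
    by (auto simp: Gamma_Spec_def gamma_carrier_def no_pts)
  moreover have "pzero (Gamma_Spec A) = gamma_const A \<zero>" "pone (Gamma_Spec A) = gamma_const A \<one>"
    by (simp_all add: Gamma_Spec_def)
  moreover have "padd (Gamma_Spec A) f g = (\<lambda>P. undefined)"
    and "pmult (Gamma_Spec A) f g = (\<lambda>P. undefined)"
    and "psummable (Gamma_Spec A) (\<lambda>P. undefined) (\<lambda>P. undefined)" for f g
    by (simp_all add: Gamma_Spec_def no_pts gamma_carrier_def)
  ultimately show ?thesis
    unfolding pring_iso_def bij_betw_def const
    using carrier_trivial[OF assms] summable_zero[of \<zero>] by auto
qed

end

section \<open>Localization at a set of units\<close>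

locale unit_localization = partial_ring_rules +
  fixes S :: "'a set"
  assumes S_subset: "S \<subseteq> C"
    and one_in_S: "\<one> \<in> S"
    and S_mult_closed: "s \<in> S \<Longrightarrow> t \<in> S \<Longrightarrow> s \<cdot> t \<in> S"
    and S_invertible: "s \<in> S \<Longrightarrow> \<exists>s'\<in>C. s \<cdot> s' = \<one>"
begin

lemma S_carrier [simp]: "s \<in> S \<Longrightarrow> s \<in> C"
  using S_subset by blast

lemma inverse_mult_cancel:
  assumes "s \<in> S" "s' \<in> C" "s \<cdot> s' = \<one>" "x \<in> C"
  shows "s' \<cdot> (s \<cdot> x) = x"
proof -
  have "s' \<cdot> (s \<cdot> x) = s \<cdot> s' \<cdot> x"
    using assms mult_assoc[of s' s x] mult_comm[of s s'] by simp
  then show ?thesis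
    using assms by simp
qed

lemma unit_cancel:
  assumes "s \<in> S" "x \<in> C" "y \<in> C" "s \<cdot> x = s \<cdot> y"
  shows "x = y"
proof -
  obtain s' where "s' \<in> C" "s \<cdot> s' = \<one>"
    using S_invertible assms(1) by blast
  then show ?thesis
    using inverse_mult_cancel assms by metis
qed

lemma mem_frac_cls_iff:
  assumes "a \<in> C" "s \<in> S"
  shows "(b, t) \<in> frac_cls A S a s \<longleftrightarrow> b \<in> C \<and> t \<in> S \<and> t \<cdot> a = s \<cdot> b"
proof
  assume "(b, t) \<in> frac_cls A S a s"
  then obtain u where "b \<in> C" "t \<in> S" "u \<in> S" "u \<cdot> (t \<cdot> a) = u \<cdot> (s \<cdot> b)"
    unfolding frac_cls_def by blast
  then show "b \<in> C \<and> t \<in> S \<and> t \<cdot> a = s \<cdot> b"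
    using unit_cancel[of u "t \<cdot> a" "s \<cdot> b"] assms by simp
next
  assume "b \<in> C \<and> t \<in> S \<and> t \<cdot> a = s \<cdot> b"
  then show "(b, t) \<in> frac_cls A S a s"
    using one_in_S assms unfolding frac_cls_def by auto
qed

definition frac :: "'a \<Rightarrow> ('a \<times> 'a) set" where
  "frac a = frac_cls A S a \<one>"

lemma mem_frac_iff: "a \<in> C \<Longrightarrow> (b, t) \<in> frac a \<longleftrightarrow> b \<in> C \<and> t \<in> S \<and> b = t \<cdot> a"
  unfolding frac_def using mem_frac_cls_iff[OF _ one_in_S] by auto

lemma pair_one_mem_frac: "a \<in> C \<Longrightarrow> (a, \<one>) \<in> frac a"
  using mem_frac_iff one_in_S by simp

lemma inj_on_frac: "inj_on frac C"
  by (rule inj_onI) (metis mem_frac_iff pair_one_mem_frac mult_one_left)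

lemma frac_cls_mult_eq_frac:
  assumes "c \<in> C" "s \<in> S"
  shows "frac_cls A S (s \<cdot> c) s = frac c"
proof (rule set_eqI, clarify)
  fix b t
  have "t \<cdot> (s \<cdot> c) = s \<cdot> b \<longleftrightarrow> b = t \<cdot> c" if "b \<in> C" "t \<in> S"
  proof -
    have "t \<cdot> (s \<cdot> c) = s \<cdot> (t \<cdot> c)"
      using mult_left_commute that assms by simp
    then show ?thesis
      using unit_cancel[of s b "t \<cdot> c"] that assms by auto
  qed
  then show "(b, t) \<in> frac_cls A S (s \<cdot> c) s \<longleftrightarrow> (b, t) \<in> frac c"
    unfolding mem_frac_cls_iff[OF mult_closed[OF S_carrier[OF assms(2)] assms(1)] assms(2)]
      mem_frac_iff[OF assms(1)] by blast
qed

lemma frac_cls_eq_frac: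
  assumes "a \<in> C" "s \<in> S"
  obtains c where "c \<in> C" "frac_cls A S a s = frac c"
proof -
  obtain s' where s': "s' \<in> C" "s \<cdot> s' = \<one>"
    using S_invertible assms(2) by blast
  then have "s \<cdot> (s' \<cdot> a) = a"
    using mult_assoc[of s s' a] assms by simp
  then show ?thesis
    using that[of "s' \<cdot> a"] frac_cls_mult_eq_frac[of "s' \<cdot> a" s] s' assms by simp
qed

lemma loc_carrier_eq: "loc_carrier A S = frac ` C"
proof
  show "loc_carrier A S \<subseteq> frac ` C"
    unfolding loc_carrier_def by (auto elim: frac_cls_eq_frac)
  show "frac ` C \<subseteq> loc_carrier A S"
    unfolding loc_carrier_def frac_def using one_in_S by blast
qed

lemma res_frac:
  assumes "mult_set A W = S" "c \<in> C"
  shows "res A W (frac c) = frac c"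
proof -
  have "{frac_cls A S a s | a s. (a, s) \<in> frac c} = {frac c}"
  proof
    show "{frac_cls A S a s | a s. (a, s) \<in> frac c} \<subseteq> {frac c}"
      using mem_frac_iff[OF assms(2)] frac_cls_mult_eq_frac[OF assms(2)] by auto
    show "{frac c} \<subseteq> {frac_cls A S a s | a s. (a, s) \<in> frac c}"
      using pair_one_mem_frac[OF assms(2)] unfolding frac_def by blast
  qed
  then show ?thesis
    unfolding res_def assms(1) by simp
qed

lemma loc_summable_frac_iff:
  assumes "a \<in> C" "b \<in> C"
  shows "loc_summable A S (frac a) (frac b) \<longleftrightarrow> sm a b"
proof
  assume "loc_summable A S (frac a) (frac b)"
  then obtain u where u: "u \<in> S" "sm (u \<cdot> a) (u \<cdot> b)"
    unfolding loc_summable_def using mem_frac_iff assms by auto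
  obtain u' where u': "u' \<in> C" "u \<cdot> u' = \<one>"
    using S_invertible u(1) by blast
  have "u \<cdot> x \<cdot> u' = x" if "x \<in> C" for x
    using inverse_mult_cancel[OF u(1) u' that] mult_comm[of "u \<cdot> x" u'] u(1) u'(1) that
    by simp
  then show "sm a b"
    using summable_mult_distrib[OF u(2) u'(1)] assms by simp
next
  assume "sm a b"
  then show "loc_summable A S (frac a) (frac b)"
    unfolding loc_summable_def loc_carrier_eq using pair_one_mem_frac assms by blast
qed

lemma loc_add_frac:
  assumes "sm a b"
  shows "loc_add A S (frac a) (frac b) = frac (a \<oplus> b)"
proof -
  have C: "a \<in> C" "b \<in> C" "a \<oplus> b \<in> C"
    using summable_closed assms by auto
  have "frac_cls A S (a' \<oplus> b') u = frac (a \<oplus> b)"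
    if "(a', u) \<in> frac a" "(b', u) \<in> frac b" for a' b' u
  proof -
    have u: "u \<in> S" "a' = u \<cdot> a" "b' = u \<cdot> b"
      using that mem_frac_iff C by auto
    then have "a' \<oplus> b' = u \<cdot> (a \<oplus> b)"
      using summable_mult_distrib[OF assms, of u] C
        mult_comm[of u a] mult_comm[of u b] mult_comm[of u "a \<oplus> b"] by auto
    then show ?thesis
      using frac_cls_mult_eq_frac C u(1) by simp
  qed
  moreover have "frac_cls A S (a \<oplus> b) \<one> = frac (a \<oplus> b)"
    by (simp add: frac_def)
  ultimately have "{frac_cls A S (a' \<oplus> b') u | a' b' u.
      (a', u) \<in> frac a \<and> (b', u) \<in> frac b \<and> sm a' b'} = {frac (a \<oplus> b)}"
    using pair_one_mem_frac C assms by blast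
  then show ?thesis
    unfolding loc_add_def by simp
qed

lemma loc_mult_frac:
  assumes "a \<in> C" "b \<in> C"
  shows "loc_mult A S (frac a) (frac b) = frac (a \<cdot> b)"
proof -
  have "frac_cls A S (a' \<cdot> b') (s \<cdot> t) = frac (a \<cdot> b)"
    if "(a', s) \<in> frac a" "(b', t) \<in> frac b" for a' b' s t
  proof -
    have st: "s \<in> S" "t \<in> S" "a' = s \<cdot> a" "b' = t \<cdot> b"
      using that mem_frac_iff assms by auto
    then have "a' \<cdot> b' = s \<cdot> (a \<cdot> (t \<cdot> b))"
      using assms mult_assoc by simp
    also have "\<dots> = s \<cdot> t \<cdot> (a \<cdot> b)"
      using assms st mult_assoc mult_left_commute[of a t b] by simp
    finally have "a' \<cdot> b' = s \<cdot> t \<cdot> (a \<cdot> b)" .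
    then show ?thesis
      using frac_cls_mult_eq_frac S_mult_closed st assms by simp
  qed
  moreover have "frac_cls A S (a \<cdot> b) (\<one> \<cdot> \<one>) = frac (a \<cdot> b)"
    by (simp add: frac_def)
  ultimately have "{frac_cls A S (a' \<cdot> b') (s \<cdot> t) | a' s b' t.
      (a', s) \<in> frac a \<and> (b', t) \<in> frac b} = {frac (a \<cdot> b)}"
    using pair_one_mem_frac assms by blast
  then show ?thesis
    unfolding loc_mult_def by simp
qed

end

section \<open>The spectrum of a partial field\<close>

lemma spec_open_subset_spec_pts: "spec_open A U \<Longrightarrow> U \<subseteq> spec_pts A"
  by (induction rule: spec_open.induct) (auto simp: basicD_def)

locale partial_field_rules = partial_ring_rules +
  assumes mult_inverse: "a \<in> C \<Longrightarrow> a \<noteq> \<zero> \<Longrightarrow> \<exists>b\<in>C. a \<cdot> b = \<one>"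
begin

lemma mult_eq_zeroD:
  assumes "a \<in> C" "b \<in> C" "a \<cdot> b = \<zero>"
  shows "a = \<zero> \<or> b = \<zero>"
proof (cases "a = \<zero>")
  case False
  then obtain a' where a': "a' \<in> C" "a \<cdot> a' = \<one>"
    using mult_inverse assms(1) by blast
  have "b = a' \<cdot> a \<cdot> b"
    using a' assms mult_comm[of a a'] by simp
  also have "\<dots> = \<zero>"
    using a' assms mult_assoc by simp
  finally show ?thesis ..
qed simp

lemma proper_pideal_eq_zero:
  assumes "pideal A I" "I \<noteq> C"
  shows "I = {\<zero>}"
proof -
  have absorb: "x \<cdot> y \<in> I" if "x \<in> C" "y \<in> I" for x y
    using assms(1) that by (simp add: pideal_def)
  have "a = \<zero>" if "a \<in> I" for a
  proof (rule ccontr)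
    assume "a \<noteq> \<zero>"
    moreover have "a \<in> C"
      using assms(1) that by (auto simp: pideal_def)
    ultimately obtain a' where "a' \<in> C" "a \<cdot> a' = \<one>"
      using mult_inverse by blast
    then have "\<one> \<in> I"
      using absorb[of a' a] that \<open>a \<in> C\<close> mult_comm[of a a'] by simp
    then have "C \<subseteq> I"
      using absorb mult_one_right by (metis subsetI)
    then show False
      using assms by (auto simp: pideal_def)
  qed
  then show ?thesis
    using assms(1) by (auto simp: pideal_def)
qed

end

lemma partial_field_rulesI: "partial_field A \<Longrightarrow> partial_field_rules A"
  by (simp add: partial_field_def partial_field_rules_def partial_field_rules_axioms_def
      partial_ring_rules_def)

locale nontrivial_partial_field = partial_field_rules +
  assumes one_neq_zero: "\<one> \<noteq> \<zero>"
begin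

lemma prime_pideal_iff: "prime_pideal A P \<longleftrightarrow> P = {\<zero>}"
proof
  assume "prime_pideal A P"
  then show "P = {\<zero>}"
    using proper_pideal_eq_zero by (simp add: prime_pideal_def)
next
  assume "P = {\<zero>}"
  then show "prime_pideal A P"
    using one_closed one_neq_zero mult_eq_zeroD add_zero_right
    by (auto simp: prime_pideal_def pideal_def)
qed

lemma spec_pts_eq: "spec_pts A = {{\<zero>}}"
  using prime_pideal_iff by (auto simp: spec_pts_def)

lemma mult_set_spec_pts: "mult_set A (spec_pts A) = C - {\<zero>}"
  by (auto simp: mult_set_def spec_pts_eq)

sublocale unit_localization A "C - {\<zero>}"
  using one_neq_zero mult_eq_zeroD mult_inverse by unfold_locales auto

section \<open>Global sections over the one-point spectrum\<close>

lemma mem_spec_pts_iff: "P \<in> spec_pts A \<longleftrightarrow> P = {\<zero>}"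
  by (simp add: spec_pts_eq)

lemma spec_open_eq: "spec_open A U \<Longrightarrow> {\<zero>} \<in> U \<Longrightarrow> U = spec_pts A"
  using spec_open_subset_spec_pts[of A U] mem_spec_pts_iff by auto

lemma sec_spec_pts: "sec A (spec_pts A) = frac ` C"
  by (simp add: mult_set_spec_pts loc_carrier_eq)

lemma germ_frac:
  assumes "c \<in> C"
  shows "germ A {\<zero>} (spec_pts A) (frac c) = {(spec_pts A, frac c)}"
proof
  show "germ A {\<zero>} (spec_pts A) (frac c) \<subseteq> {(spec_pts A, frac c)}"
  proof clarify
    fix V y
    assume "(V, y) \<in> germ A {\<zero>} (spec_pts A) (frac c)"
    then obtain W where "spec_open A V" "{\<zero>} \<in> V" "y \<in> sec A V"
      and "spec_open A W" "{\<zero>} \<in> W" "res A W (frac c) = res A W y"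
      unfolding germ_def by blast
    then have V: "V = spec_pts A" and W: "W = spec_pts A"
      using spec_open_eq by auto
    obtain d where "d \<in> C" "y = frac d"
      using \<open>y \<in> sec A V\<close> sec_spec_pts V by auto
    then show "V = spec_pts A \<and> y = frac c"
      using V \<open>res A W (frac c) = res A W y\<close> res_frac[OF mult_set_spec_pts] assms
      by (simp add: W)
  qed
  show "{(spec_pts A, frac c)} \<subseteq> germ A {\<zero>} (spec_pts A) (frac c)"
    using assms sec_spec_pts mem_spec_pts_iff spec_open.whole unfolding germ_def by blast
qed

lemma germ_frac_in_stalk: "c \<in> C \<Longrightarrow> {(spec_pts A, frac c)} \<in> stalk A {\<zero>}"
  unfolding stalk_def using germ_frac sec_spec_pts mem_spec_pts_iff spec_open.whole by blast

lemma gamma_const_eq: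
  assumes "c \<in> C"
  shows "gamma_const A c = (\<lambda>P. if P = {\<zero>} then {(spec_pts A, frac c)} else undefined)"
proof
  fix P
  have "frac_cls A (mult_set A (spec_pts A)) c \<one> = frac c"
    by (simp add: mult_set_spec_pts frac_def)
  then show "gamma_const A c P = (if P = {\<zero>} then {(spec_pts A, frac c)} else undefined)"
    using germ_frac[OF assms] by (simp add: gamma_const_def mem_spec_pts_iff)
qed

lemma gamma_const_at_point: "c \<in> C \<Longrightarrow> gamma_const A c {\<zero>} = {(spec_pts A, frac c)}"
  by (simp add: gamma_const_eq)

lemma gamma_carrier_eq: "gamma_carrier A = gamma_const A ` C"
proof
  show "gamma_const A ` C \<subseteq> gamma_carrier A"
  proof clarify
    fix c
    assume c: "c \<in> C"
    have "\<forall>Q\<in>spec_pts A. gamma_const A c Q = germ A Q (spec_pts A) (frac c)"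
      using gamma_const_eq[OF c] germ_frac[OF c] by (simp add: mem_spec_pts_iff)
    moreover have "frac c \<in> sec A (spec_pts A)"
      using c sec_spec_pts by simp
    moreover have "\<forall>P. P \<notin> spec_pts A \<longrightarrow> gamma_const A c P = undefined"
      by (simp add: gamma_const_def)
    ultimately show "gamma_const A c \<in> gamma_carrier A"
      using spec_open.whole[of A] unfolding gamma_carrier_def
      by (intro CollectI conjI ballI exI[of _ "spec_pts A"] exI[of _ "frac c"]) auto
  qed
  show "gamma_carrier A \<subseteq> gamma_const A ` C"
  proof
    fix \<sigma>
    assume "\<sigma> \<in> gamma_carrier A"
    then have undef: "\<forall>P. P \<notin> spec_pts A \<longrightarrow> \<sigma> P = undefined"
      and covered: "\<forall>P\<in>spec_pts A. \<exists>U x. spec_open A U \<and> P \<in> U \<and> x \<in> sec A U \<and>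
          (\<forall>Q\<in>U. \<sigma> Q = germ A Q U x)"
      unfolding gamma_carrier_def by blast+
    obtain U x where "spec_open A U" "{\<zero>} \<in> U" "x \<in> sec A U"
      and germ_eq: "\<forall>Q\<in>U. \<sigma> Q = germ A Q U x"
      using covered mem_spec_pts_iff by blast
    then have U: "U = spec_pts A"
      using spec_open_eq by blast
    obtain d where d: "d \<in> C" "x = frac d"
      using \<open>x \<in> sec A U\<close> sec_spec_pts U by auto
    have "\<sigma> = gamma_const A d"
    proof
      fix P
      show "\<sigma> P = gamma_const A d P"
        using undef germ_eq germ_frac[OF d(1)] gamma_const_eq[OF d(1)]
        by (cases "P = {\<zero>}") (simp_all add: U d(2) mem_spec_pts_iff)
    qed
    then show "\<sigma> \<in> gamma_const A ` C"
      using d(1) by blast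
  qed
qed

lemma germ_summable_frac_iff:
  "a \<in> C \<Longrightarrow> b \<in> C \<Longrightarrow>
    germ_summable A {\<zero>} {(spec_pts A, frac a)} {(spec_pts A, frac b)} \<longleftrightarrow> sm a b"
  unfolding germ_summable_def
  using germ_frac_in_stalk loc_summable_frac_iff mult_set_spec_pts mem_spec_pts_iff spec_open.whole
  by auto

lemma germ_add_frac:
  assumes "sm a b"
  shows "germ_add A {\<zero>} {(spec_pts A, frac a)} {(spec_pts A, frac b)} = {(spec_pts A, frac (a \<oplus> b))}"
proof -
  have "a \<in> C" "b \<in> C" "a \<oplus> b \<in> C"
    using summable_closed assms by auto
  then have "{germ A {\<zero>} W (loc_add A (mult_set A W) x y) | W x y.
      spec_open A W \<and> {\<zero>} \<in> W \<and> (W, x) \<in> {(spec_pts A, frac a)} \<and> (W, y) \<in> {(spec_pts A, frac b)}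
      \<and> loc_summable A (mult_set A W) x y} = {{(spec_pts A, frac (a \<oplus> b))}}"
    using assms loc_summable_frac_iff loc_add_frac germ_frac mult_set_spec_pts mem_spec_pts_iff
      spec_open.whole
    by auto
  then show ?thesis
    unfolding germ_add_def by simp
qed

lemma germ_mult_frac:
  assumes "a \<in> C" "b \<in> C"
  shows "germ_mult A {\<zero>} {(spec_pts A, frac a)} {(spec_pts A, frac b)} = {(spec_pts A, frac (a \<cdot> b))}"
proof -
  have "{germ A {\<zero>} W (loc_mult A (mult_set A W) x y) | W x y.
      spec_open A W \<and> {\<zero>} \<in> W \<and> (W, x) \<in> {(spec_pts A, frac a)} \<and> (W, y) \<in> {(spec_pts A, frac b)}}
      = {{(spec_pts A, frac (a \<cdot> b))}}"
    using assms loc_mult_frac germ_frac mult_set_spec_pts mem_spec_pts_iff spec_open.whole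
    by auto
  then show ?thesis
    unfolding germ_mult_def by simp
qed

lemma Gamma_Spec_summable_iff:
  "psummable (Gamma_Spec A) \<sigma> \<tau> \<longleftrightarrow>
    \<sigma> \<in> gamma_carrier A \<and> \<tau> \<in> gamma_carrier A \<and> germ_summable A {\<zero>} (\<sigma> {\<zero>}) (\<tau> {\<zero>})"
  by (simp add: Gamma_Spec_def spec_pts_eq)

lemma Gamma_Spec_add_eq:
  "padd (Gamma_Spec A) \<sigma> \<tau> = (\<lambda>P. if P = {\<zero>} then germ_add A {\<zero>} (\<sigma> {\<zero>}) (\<tau> {\<zero>}) else undefined)"
  by (simp add: Gamma_Spec_def mem_spec_pts_iff cong: if_cong)

lemma Gamma_Spec_mult_eq:
  "pmult (Gamma_Spec A) \<sigma> \<tau> = (\<lambda>P. if P = {\<zero>} then germ_mult A {\<zero>} (\<sigma> {\<zero>}) (\<tau> {\<zero>}) else undefined)"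
  by (simp add: Gamma_Spec_def mem_spec_pts_iff cong: if_cong)

lemma gamma_const_iso: "pring_iso A (Gamma_Spec A) (gamma_const A)"
proof -
  have "inj_on (gamma_const A) C"
  proof (rule inj_onI)
    fix a b
    assume "a \<in> C" "b \<in> C" "gamma_const A a = gamma_const A b"
    then have "{(spec_pts A, frac a)} = {(spec_pts A, frac b)}"
      using gamma_const_at_point by metis
    then show "a = b"
      using inj_onD[OF inj_on_frac] \<open>a \<in> C\<close> \<open>b \<in> C\<close> by blast
  qed
  moreover have "psummable (Gamma_Spec A) (gamma_const A a) (gamma_const A b) \<longleftrightarrow> sm a b"
    if "a \<in> C" "b \<in> C" for a b
    using that germ_summable_frac_iff
    by (simp add: Gamma_Spec_summable_iff gamma_carrier_eq gamma_const_at_point)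
  moreover have "gamma_const A (a \<oplus> b) = padd (Gamma_Spec A) (gamma_const A a) (gamma_const A b)"
    if "sm a b" for a b
  proof -
    have "a \<in> C" "b \<in> C" "a \<oplus> b \<in> C"
      using summable_closed[OF that] by auto
    then show ?thesis
      using germ_add_frac[OF that] gamma_const_at_point[of a] gamma_const_at_point[of b]
      by (simp add: Gamma_Spec_add_eq gamma_const_eq[of "a \<oplus> b"] cong: if_cong)
  qed
  moreover have "gamma_const A (a \<cdot> b) = pmult (Gamma_Spec A) (gamma_const A a) (gamma_const A b)"
    if "a \<in> C" "b \<in> C" for a b
    using that germ_mult_frac[OF that] gamma_const_at_point[of a] gamma_const_at_point[of b]
    by (simp add: Gamma_Spec_mult_eq gamma_const_eq[of "a \<cdot> b"] cong: if_cong)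
  moreover have "pcarrier (Gamma_Spec A) = gamma_const A ` C"
    "pzero (Gamma_Spec A) = gamma_const A \<zero>" "pone (Gamma_Spec A) = gamma_const A \<one>"
    using gamma_carrier_eq by (simp_all add: Gamma_Spec_def)
  ultimately show ?thesis
    unfolding pring_iso_def bij_betw_def by simp
qed

end

theorem mainTheorem13:
  fixes F :: "'a pring"
  assumes "partial_field F"
  shows "pring_isomorphic F (Gamma_Spec F)"
proof -
  interpret partial_field_rules F
    using assms by (rule partial_field_rulesI)
  have "pring_iso F (Gamma_Spec F) (gamma_const F)"
  proof (cases "pone F = pzero F")
    case True
    then show ?thesis
      by (rule gamma_const_iso_trivial)
  next
    case False
    then interpret nontrivial_partial_field F
      by unfold_locales
    show ?thesis
      by (rule gamma_const_iso)
  qed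
  then show ?thesis
    unfolding pring_isomorphic_def by blast
qed

end
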